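(* Let $U$ be a unitary on a finite-dimensional Hilbert space $\mathcal{H}$ and consider a verification protocol for $U$ with set of test states $\mathscr{T}=\{|\psi_j\rangle\}_j$ and effective set $\mathscr{T}_{\mathrm{eff}}$. (i) If $U$ can be verified reliably by this protocol, then $\mathscr{T}$ is an identification set for $U$. (ii) If $\mathscr{T}_{\mathrm{eff}}$ is an identification set for $U$, then $U$ can be verified reliably by this protocol. (iii) If the protocol is ordinary, then $U$ can be verified reliably by it if and only if $\mathscr{T}$ is an identification set for $U$.
   Context: A verification protocol for $U$ consists of a finite set $\mathscr{T}=\{|\psi_j\rangle\}$ of pure test states, each chosen with probability $p_j>0$, and for each $j$ a verification operator $\Omega_j=\sum_lq_{jl}E_{jl}$ for the output state $U|\psi_j\rangle$, where each $E_{jl}$ satisfies $0\le E_{jl}\le I$ and $E_{jl}U|\psi_j\rangle=U|\psi_j\rangle$, and $q_{jl}>0$ sum to 1. A quantum channel $\Lambda$ passes test $j$ with probability $\mathrm{tr}[\Omega_j\Lambda(|\psi_j\rangle\langle\psi_j|)]$. $U$ is verified reliably if the unitary channel $\rho\mapsto U\rho U^\dagger$ is the only quantum channel on $\mathcal{H}$ passing every test with certainty. Let $\nu_j=1-\beta(\Omega_j)$, where $\beta(\Omega_j)$ is the second largest eigenvalue of $\Omega_j$; $|\psi_j\rangle$ is effective if $\nu_j>0$, $\mathscr{T}_{\mathrm{eff}}$ is the set of effective test states, and the protocol is ordinary if all $\nu_j>0$. A set $\mathscr{S}$ of pure states is an identification set for $U$ if every quantum channel $\Lambda$ with $\Lambda(|\psi\rangle\langle\psi|)=U|\psi\rangle\langle\psi|U^\dagger$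 for all $|\psi\rangle\in\mathscr{S}$ satisfies $\Lambda(\rho)=U\rho U^\dagger$ for all density operators $\rho$ on $\mathcal{H}$. *)

theory Defs
  imports "Jordan_Normal_Form.Schur_Decomposition" "Jordan_Normal_Form.Char_Poly"
begin

(* The Hilbert space H is C^n; operators on H are complex n x n matrices (JNF "mat"). *)

definition mtrace :: "complex mat \<Rightarrow> complex" where
  "mtrace A = (\<Sum>i<dim_row A. A $$ (i,i))"

definition psd :: "nat \<Rightarrow> complex mat \<Rightarrow> bool" where
  "psd n A \<longleftrightarrow> A \<in> carrier_mat n n \<and>
     (\<forall>v \<in> carrier_vec n. Im (conjugate v \<bullet> (A *\<^sub>v v)) = 0 \<and> Re (conjugate v \<bullet> (A *\<^sub>v v)) \<ge> 0)"

definition density_op :: "nat \<Rightarrow> complex mat \<Rightarrow> bool" where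
  "density_op n \<rho> \<longleftrightarrow> psd n \<rho> \<and> mtrace \<rho> = 1"

definition unitary_mat :: "nat \<Rightarrow> complex mat \<Rightarrow> bool" where
  "unitary_mat n U \<longleftrightarrow> U \<in> carrier_mat n n \<and> U * mat_adjoint U = 1\<^sub>m n \<and> mat_adjoint U * U = 1\<^sub>m n"

definition pure_state :: "nat \<Rightarrow> complex vec \<Rightarrow> bool" where
  "pure_state n \<psi> \<longleftrightarrow> \<psi> \<in> carrier_vec n \<and> conjugate \<psi> \<bullet> \<psi> = 1"

definition proj :: "nat \<Rightarrow> complex vec \<Rightarrow> complex mat" where
  "proj n \<psi> = mat n n (\<lambda>(i,j). \<psi> $ i * cnj (\<psi> $ j))"

(* block (a,b) of an operator X on H \<otimes> C^k, with basis index i*k+a for |i> \<otimes> |a> *)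
definition blk :: "nat \<Rightarrow> nat \<Rightarrow> complex mat \<Rightarrow> nat \<Rightarrow> nat \<Rightarrow> complex mat" where
  "blk n k X a b = mat n n (\<lambda>(i,j). X $$ (i*k+a, j*k+b))"

(* (Lambda \<otimes> id_k) applied to X *)
definition ampl :: "nat \<Rightarrow> nat \<Rightarrow> (complex mat \<Rightarrow> complex mat) \<Rightarrow> complex mat \<Rightarrow> complex mat" where
  "ampl n k \<Lambda> X = mat (n*k) (n*k)
     (\<lambda>(p,q). (\<Lambda> (blk n k X (p mod k) (q mod k))) $$ (p div k, q div k))"

definition quantum_channel :: "nat \<Rightarrow> (complex mat \<Rightarrow> complex mat) \<Rightarrow> bool" where
  "quantum_channel n \<Lambda> \<longleftrightarrow>
     (\<forall>A \<in> carrier_mat n n. \<Lambda> A \<in> carrier_mat n n) \<and>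
     (\<forall>A \<in> carrier_mat n n. \<forall>B \<in> carrier_mat n n. \<Lambda> (A + B) = \<Lambda> A + \<Lambda> B) \<and>
     (\<forall>A \<in> carrier_mat n n. \<forall>c. \<Lambda> (c \<cdot>\<^sub>m A) = c \<cdot>\<^sub>m \<Lambda> A) \<and>
     (\<forall>A \<in> carrier_mat n n. mtrace (\<Lambda> A) = mtrace A) \<and>
     (\<forall>k \<ge> 1. \<forall>X. psd (n*k) X \<longrightarrow> psd (n*k) (ampl n k \<Lambda> X))"

definition unitary_channel :: "complex mat \<Rightarrow> complex mat \<Rightarrow> complex mat" where
  "unitary_channel U \<rho> = U * \<rho> * mat_adjoint U"

definition effect :: "nat \<Rightarrow> complex mat \<Rightarrow> bool" where
  "effect n E \<longleftrightarrow> psd n E \<and> psd n (1\<^sub>m n - E)"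

definition Omega :: "nat \<Rightarrow> ('j \<Rightarrow> 'l set) \<Rightarrow> ('j \<Rightarrow> 'l \<Rightarrow> real) \<Rightarrow> ('j \<Rightarrow> 'l \<Rightarrow> complex mat) \<Rightarrow> 'j \<Rightarrow> complex mat" where
  "Omega n L q E j = mat n n (\<lambda>(a,b). \<Sum>l\<in>L j. complex_of_real (q j l) * E j l $$ (a,b))"

definition verification_protocol ::
  "nat \<Rightarrow> complex mat \<Rightarrow> 'j set \<Rightarrow> ('j \<Rightarrow> complex vec) \<Rightarrow> ('j \<Rightarrow> real) \<Rightarrow>
   ('j \<Rightarrow> 'l set) \<Rightarrow> ('j \<Rightarrow> 'l \<Rightarrow> real) \<Rightarrow> ('j \<Rightarrow> 'l \<Rightarrow> complex mat) \<Rightarrow> bool" where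
  "verification_protocol n U J \<psi> p L q E \<longleftrightarrow>
     finite J \<and> (\<forall>j\<in>J. pure_state n (\<psi> j)) \<and>
     (\<forall>j\<in>J. p j > 0) \<and> (\<Sum>j\<in>J. p j) = 1 \<and>
     (\<forall>j\<in>J. finite (L j) \<and> L j \<noteq> {} \<and> (\<Sum>l\<in>L j. q j l) = 1 \<and>
        (\<forall>l\<in>L j. q j l > 0 \<and> effect n (E j l) \<and>
                  E j l *\<^sub>v (U *\<^sub>v \<psi> j) = U *\<^sub>v \<psi> j))"

definition pass_prob :: "nat \<Rightarrow> ('j \<Rightarrow> 'l set) \<Rightarrow> ('j \<Rightarrow> 'l \<Rightarrow> real) \<Rightarrow> ('j \<Rightarrow> 'l \<Rightarrow> complex mat)
    \<Rightarrow> ('j \<Rightarrow> complex vec) \<Rightarrow> (complex mat \<Rightarrow> complex mat) \<Rightarrow> 'j \<Rightarrow> complex" where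
  "pass_prob n L q E \<psi> \<Lambda> j = mtrace (Omega n L q E j * \<Lambda> (proj n (\<psi> j)))"

definition verified_reliably ::
  "nat \<Rightarrow> complex mat \<Rightarrow> 'j set \<Rightarrow> ('j \<Rightarrow> complex vec) \<Rightarrow>
   ('j \<Rightarrow> 'l set) \<Rightarrow> ('j \<Rightarrow> 'l \<Rightarrow> real) \<Rightarrow> ('j \<Rightarrow> 'l \<Rightarrow> complex mat) \<Rightarrow> bool" where
  "verified_reliably n U J \<psi> L q E \<longleftrightarrow>
     (\<forall>j\<in>J. pass_prob n L q E \<psi> (unitary_channel U) j = 1) \<and>
     (\<forall>\<Lambda>. quantum_channel n \<Lambda> \<and> (\<forall>j\<in>J. pass_prob n L q E \<psi> \<Lambda> j = 1) \<longrightarrow>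
        (\<forall>\<rho>. density_op n \<rho> \<longrightarrow> \<Lambda> \<rho> = unitary_channel U \<rho>))"

definition identification_set :: "nat \<Rightarrow> complex mat \<Rightarrow> complex vec set \<Rightarrow> bool" where
  "identification_set n U S \<longleftrightarrow>
     (\<forall>\<psi>\<in>S. pure_state n \<psi>) \<and>
     (\<forall>\<Lambda>. quantum_channel n \<Lambda> \<and>
        (\<forall>\<psi>\<in>S. \<Lambda> (proj n \<psi>) = unitary_channel U (proj n \<psi>)) \<longrightarrow>
        (\<forall>\<rho>. density_op n \<rho> \<longrightarrow> \<Lambda> \<rho> = unitary_channel U \<rho>))"

(* second largest eigenvalue (with multiplicity) of a Hermitian operator;
   convention 0 when dim < 2 (then it is undefined in the paper) *)
definition second_eig :: "complex mat \<Rightarrow> real" where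
  "second_eig A = (if dim_row A < 2 then 0 else
     (THE b. \<exists>es :: real list. char_poly A = prod_list (map (\<lambda>e. [:- complex_of_real e, 1:]) es)
              \<and> sorted_wrt (\<ge>) es \<and> b = es ! 1))"

definition nu :: "nat \<Rightarrow> ('j \<Rightarrow> 'l set) \<Rightarrow> ('j \<Rightarrow> 'l \<Rightarrow> real) \<Rightarrow> ('j \<Rightarrow> 'l \<Rightarrow> complex mat) \<Rightarrow> 'j \<Rightarrow> real" where
  "nu n L q E j = 1 - second_eig (Omega n L q E j)"

definition effective_set ::
  "nat \<Rightarrow> 'j set \<Rightarrow> ('j \<Rightarrow> complex vec) \<Rightarrow> ('j \<Rightarrow> 'l set) \<Rightarrow> ('j \<Rightarrow> 'l \<Rightarrow> real) \<Rightarrow> ('j \<Rightarrow> 'l \<Rightarrow> complex mat) \<Rightarrow> complex vec set" where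
  "effective_set n J \<psi> L q E = \<psi> ` {j\<in>J. nu n L q E j > 0}"

definition ordinary ::
  "nat \<Rightarrow> 'j set \<Rightarrow> ('j \<Rightarrow> 'l set) \<Rightarrow> ('j \<Rightarrow> 'l \<Rightarrow> real) \<Rightarrow> ('j \<Rightarrow> 'l \<Rightarrow> complex mat) \<Rightarrow> bool" where
  "ordinary n J L q E \<longleftrightarrow> (\<forall>j\<in>J. nu n L q E j > 0)"

end

theory Submission
  imports Defs
begin

text \<open>
  Part (i) is immediate: a channel that agrees with \<open>U\<close> on all test states passes every test
  exactly as \<open>U\<close> does, that is, with certainty.

  The heart of (ii) is that an effective test \<open>j\<close> can only be passed with certainty by a channel
  mapping \<open>\<psi>\<^sub>j\<close> to \<open>U \<psi>\<^sub>j\<close>. Diagonalise the test operator unitarily,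
  \<open>\<Omega> = W D W\<^sup>\<dagger>\<close>. As \<open>0 \<le> \<Omega> \<le> I\<close>, the eigenvalues \<open>d\<^sub>i\<close> are at most 1, and
  as the second largest one is below 1, the eigenvalue 1 is simple, with eigenvector \<open>U \<psi>\<^sub>j\<close>.
  For an output state \<open>\<rho>\<close> with \<open>tr (\<Omega> \<rho>) = 1 = tr \<rho>\<close> and \<open>\<sigma> = W\<^sup>\<dagger> \<rho> W\<close> this gives
  \<open>\<Sum>\<^sub>i (1 - d\<^sub>i) \<sigma>(i,i) = 0\<close> with nonnegative summands, so the positive semidefinite
  matrix \<open>\<sigma>\<close> lives on the eigenvalue-1 direction and \<open>\<rho>\<close> is the projector onto \<open>U \<psi>\<^sub>j\<close>.
  Hence a channel passing all tests agrees with \<open>U\<close> on the effective test states, which identify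
  \<open>U\<close>. Part (iii) follows since for an ordinary protocol every test state is effective.
\<close>

section \<open>Adjoints, unitary matrices and traces\<close>

lemma mat_adjoint_dim [simp]:
  "dim_row (mat_adjoint A) = dim_col A" "dim_col (mat_adjoint A) = dim_row A"
  by (auto simp: mat_adjoint_def)

lemma index_mat_adjoint [simp]:
  "i < dim_col A \<Longrightarrow> j < dim_row A \<Longrightarrow> mat_adjoint A $$ (i,j) = cnj (A $$ (j,i))"
  by (simp add: mat_adjoint_def mat_of_rows_def)

lemma mat_adjoint_carrier [simp]: "A \<in> carrier_mat m n \<Longrightarrow> mat_adjoint A \<in> carrier_mat n m"
  by (intro carrier_matI) auto

lemma mat_adjoint_adjoint [simp]: "mat_adjoint (mat_adjoint (A :: complex mat)) = A"
  by (rule eq_matI) auto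

lemma mat_adjoint_one [simp]: "mat_adjoint (1\<^sub>m n :: complex mat) = 1\<^sub>m n"
  by (rule eq_matI) auto

lemma mat_adjoint_zero [simp]: "mat_adjoint (0\<^sub>m m n :: complex mat) = 0\<^sub>m n m"
  by (rule eq_matI) auto

lemma dim_mat_diag [simp]: "dim_row (mat_diag n f) = n" "dim_col (mat_diag n f) = n"
  by (simp_all add: mat_diag_def)

lemma mat_adjoint_mat_diag:
  "mat_adjoint (mat_diag n f :: complex mat) = mat_diag n (\<lambda>i. cnj (f i))"
  by (rule eq_matI) (auto simp: mat_diag_def)

lemma mat_adjoint_four_block_mat:
  fixes A B C D :: "complex mat"
  assumes "A \<in> carrier_mat n1 m1" "B \<in> carrier_mat n1 m2" "C \<in> carrier_mat n2 m1" "D \<in> carrier_mat n2 m2"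
  shows "mat_adjoint (four_block_mat A B C D) =
    four_block_mat (mat_adjoint A) (mat_adjoint C) (mat_adjoint B) (mat_adjoint D)"
  by (rule eq_matI) (use assms in auto)

lemma mat_adjoint_mult:
  fixes A B :: "complex mat"
  assumes A: "A \<in> carrier_mat n k" and B: "B \<in> carrier_mat k m"
  shows "mat_adjoint (A * B) = mat_adjoint B * mat_adjoint A"
proof (rule eq_matI)
  fix i j assume "i < dim_row (mat_adjoint B * mat_adjoint A)" "j < dim_col (mat_adjoint B * mat_adjoint A)"
  with A B have i: "i < m" and j: "j < n" by auto
  have "mat_adjoint (A * B) $$ (i,j) = (\<Sum>l = 0..<k. cnj (A $$ (j,l)) * cnj (B $$ (l,i)))"
    using A B i j by (simp add: scalar_prod_def)
  also have "\<dots> = (mat_adjoint B * mat_adjoint A) $$ (i,j)"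
    using A B i j by (auto simp: scalar_prod_def mult.commute intro: sum.cong)
  finally show "mat_adjoint (A * B) $$ (i,j) = (mat_adjoint B * mat_adjoint A) $$ (i,j)" .
qed (use A B in auto)

lemma scalar_prod_mat_adjoint:
  fixes X :: "complex mat"
  assumes X: "X \<in> carrier_mat n k" and x: "x \<in> carrier_vec k" and y: "y \<in> carrier_vec n"
  shows "conjugate (X *\<^sub>v x) \<bullet> y = conjugate x \<bullet> (mat_adjoint X *\<^sub>v y)"
proof -
  have "conjugate (X *\<^sub>v x) \<bullet> y = (\<Sum>a<n. \<Sum>i<k. cnj (X $$ (a,i)) * cnj (x $ i) * y $ a)"
    using X x y by (simp add: scalar_prod_def atLeast0LessThan sum_distrib_right)
  also have "\<dots> = (\<Sum>i<k. \<Sum>a<n. cnj (x $ i) * (cnj (X $$ (a,i)) * y $ a))"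
    by (subst sum.swap) (simp add: algebra_simps)
  also have "\<dots> = conjugate x \<bullet> (mat_adjoint X *\<^sub>v y)"
    using X x y by (simp add: scalar_prod_def atLeast0LessThan sum_distrib_left)
  finally show ?thesis .
qed

lemma mult_carrier_mat_square [simp]:
  "A \<in> carrier_mat n n \<Longrightarrow> B \<in> carrier_mat n n \<Longrightarrow> A * B \<in> carrier_mat n n"
  by (rule mult_carrier_mat)

lemma unitary_matI:
  fixes W :: "complex mat"
  assumes W: "W \<in> carrier_mat n n" and "mat_adjoint W * W = 1\<^sub>m n"
  shows "unitary_mat n W"
  using assms mat_mult_left_right_inverse[OF mat_adjoint_carrier[OF W] W]
  unfolding unitary_mat_def by auto

lemma unitary_mat_cancel:
  assumes "unitary_mat n W" "X \<in> carrier_mat n m"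
  shows "mat_adjoint W * (W * X) = X" "W * (mat_adjoint W * X) = X"
  using assms assoc_mult_mat[of "mat_adjoint W" n n W n X m] assoc_mult_mat[of W n n "mat_adjoint W" n X m]
  unfolding unitary_mat_def by auto

lemma unitary_mat_adjoint:
  assumes "unitary_mat n W"
  shows "unitary_mat n (mat_adjoint W)"
  using assms unfolding unitary_mat_def by auto

lemma unitary_mat_mult_vec_cancel:
  assumes "unitary_mat n W" "v \<in> carrier_vec n"
  shows "W *\<^sub>v (mat_adjoint W *\<^sub>v v) = v" "mat_adjoint W *\<^sub>v (W *\<^sub>v v) = v"
  using assms assoc_mult_mat_vec[of W n n "mat_adjoint W" n v] assoc_mult_mat_vec[of "mat_adjoint W" n n W n v]
  unfolding unitary_mat_def by auto

lemma unitary_mat_norm: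
  assumes W: "unitary_mat n W" and v: "v \<in> carrier_vec n"
  shows "conjugate (W *\<^sub>v v) \<bullet> (W *\<^sub>v v) = conjugate v \<bullet> v"
proof -
  have Wc: "W \<in> carrier_mat n n" using W unfolding unitary_mat_def by auto
  then show ?thesis
    using scalar_prod_mat_adjoint[OF Wc v] unitary_mat_mult_vec_cancel(2)[OF W v] v by simp
qed

lemma similar_mat_wit_unitary:
  assumes W: "unitary_mat n W" and A: "A \<in> carrier_mat n n"
  shows "similar_mat_wit A (mat_adjoint W * A * W) W (mat_adjoint W)"
proof (rule similar_mat_witI[of _ _ n])
  have C: "W \<in> carrier_mat n n" "mat_adjoint W \<in> carrier_mat n n"
    using W unfolding unitary_mat_def by auto
  show "A = W * (mat_adjoint W * A * W) * mat_adjoint W"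
    using C A unitary_mat_cancel(2)[OF W, of "A * (W * mat_adjoint W)" n] W
    by (simp add: assoc_mult_mat[of _ n n _ n _ n] unitary_mat_def)
qed (use W A in \<open>auto simp: unitary_mat_def\<close>)

lemma similar_mat_wit_mult:
  assumes AB: "similar_mat_wit A B P Q" and AB': "similar_mat_wit A' B' P Q"
  shows "similar_mat_wit (A * A') (B * B') P Q"
proof -
  define n where "n = dim_row A"
  note w = similar_mat_witD[OF n_def AB]
  have "dim_row A' = n"
    using similar_mat_witD(6)[OF refl AB'] w(6) by (metis carrier_matD(1))
  note w' = similar_mat_witD[OF this[symmetric] AB']
  have "A * A' = P * (B * ((Q * P) * (B' * Q)))"
    unfolding w(3) w'(3) using w(4-7) w'(4-7) by (simp add: assoc_mult_mat[of _ n n _ n _ n])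
  also have "\<dots> = P * (B * B') * Q"
    using w(2,4-7) w'(4-7) by (simp add: assoc_mult_mat[of _ n n _ n _ n])
  finally show ?thesis
    using w(1,2,4-7) w'(4-7) by (intro similar_mat_witI[of _ _ n]) simp_all
qed

lemma similar_mat_wit_one_minus:
  fixes A B P Q :: "'a :: ring_1 mat"
  assumes AB: "similar_mat_wit A B P Q" and A: "A \<in> carrier_mat n n"
  shows "similar_mat_wit (1\<^sub>m n - A) (1\<^sub>m n - B) P Q"
proof -
  note w = similar_mat_witD2[OF A AB]
  have "P * (1\<^sub>m n - B) = P - P * B"
    using w(5,6) mult_minus_distrib_mat[of P n n "1\<^sub>m n" n B] by simp
  then have "P * (1\<^sub>m n - B) * Q = P * Q - P * B * Q"
    using w(5-7) minus_mult_distrib_mat[of P n n "P * B" Q n] by simp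
  then show ?thesis
    using w by (intro similar_mat_witI[of _ _ n]) (simp_all add: minus_carrier_mat)
qed

lemma mtrace_mult_comm:
  fixes A B :: "complex mat"
  assumes A: "A \<in> carrier_mat n k" and B: "B \<in> carrier_mat k n"
  shows "mtrace (A * B) = mtrace (B * A)"
proof -
  have "mtrace (A * B) = (\<Sum>i<n. \<Sum>l<k. A $$ (i,l) * B $$ (l,i))"
    using A B by (simp add: mtrace_def scalar_prod_def atLeast0LessThan)
  also have "\<dots> = (\<Sum>l<k. \<Sum>i<n. B $$ (l,i) * A $$ (i,l))"
    by (subst sum.swap) (simp add: mult.commute)
  also have "\<dots> = mtrace (B * A)"
    using A B by (simp add: mtrace_def scalar_prod_def atLeast0LessThan)
  finally show ?thesis .
qed

lemma mtrace_similar_mat_wit: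
  fixes A B :: "complex mat"
  assumes AB: "similar_mat_wit A B P Q"
  shows "mtrace A = mtrace B"
proof -
  define n where "n = dim_row A"
  note w = similar_mat_witD[OF n_def AB]
  have "mtrace (P * (B * Q)) = mtrace (B * Q * P)"
    using w(5-7) by (intro mtrace_mult_comm[of _ n n]) simp_all
  also have "B * Q * P = B"
    using w(2,5-7) by (simp add: assoc_mult_mat[of _ n n _ n _ n])
  finally show ?thesis
    using w(3,5-7) by (simp add: assoc_mult_mat[of _ n n _ n _ n])
qed

lemma proj_carrier [simp]: "proj n \<psi> \<in> carrier_mat n n"
  by (simp add: proj_def)

lemma proj_dim [simp]: "dim_row (proj n \<psi>) = n" "dim_col (proj n \<psi>) = n"
  by (simp_all add: proj_def)

lemma index_proj [simp]: "a < n \<Longrightarrow> b < n \<Longrightarrow> proj n \<psi> $$ (a,b) = \<psi> $ a * cnj (\<psi> $ b)"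
  by (simp add: proj_def)

lemma proj_mult_vec:
  assumes A: "A \<in> carrier_mat n n" and \<psi>: "\<psi> \<in> carrier_vec n"
  shows "proj n (A *\<^sub>v \<psi>) = A * proj n \<psi> * mat_adjoint A"
proof (rule eq_matI)
  fix a b assume "a < dim_row (A * proj n \<psi> * mat_adjoint A)" "b < dim_col (A * proj n \<psi> * mat_adjoint A)"
  with A have a: "a < n" and b: "b < n" by auto
  have "(A * proj n \<psi> * mat_adjoint A) $$ (a,b)
      = (\<Sum>l<n. (\<Sum>k<n. A $$ (a,k) * (\<psi> $ k * cnj (\<psi> $ l))) * cnj (A $$ (b,l)))"
    using A a b by (simp add: scalar_prod_def atLeast0LessThan)
  also have "\<dots> = (\<Sum>k<n. A $$ (a,k) * \<psi> $ k) * cnj (\<Sum>l<n. A $$ (b,l) * \<psi> $ l)"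
    by (simp add: sum_distrib_left sum_distrib_right algebra_simps)
  also have "\<dots> = proj n (A *\<^sub>v \<psi>) $$ (a,b)"
    using A \<psi> a b by (simp add: scalar_prod_def atLeast0LessThan)
  finally show "proj n (A *\<^sub>v \<psi>) $$ (a,b) = (A * proj n \<psi> * mat_adjoint A) $$ (a,b)" ..
qed (use A in auto)

lemma mtrace_mult_proj:
  assumes M: "M \<in> carrier_mat n n" and \<psi>: "\<psi> \<in> carrier_vec n"
  shows "mtrace (M * proj n \<psi>) = conjugate \<psi> \<bullet> (M *\<^sub>v \<psi>)"
proof -
  have "mtrace (M * proj n \<psi>) = (\<Sum>i<n. \<Sum>l<n. M $$ (i,l) * (\<psi> $ l * cnj (\<psi> $ i)))"
    using M by (simp add: mtrace_def scalar_prod_def atLeast0LessThan)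
  also have "\<dots> = (\<Sum>i<n. cnj (\<psi> $ i) * (\<Sum>l<n. M $$ (i,l) * \<psi> $ l))"
    by (simp add: sum_distrib_left algebra_simps)
  also have "\<dots> = conjugate \<psi> \<bullet> (M *\<^sub>v \<psi>)"
    using M \<psi> by (simp add: scalar_prod_def atLeast0LessThan)
  finally show ?thesis .
qed

lemma mtrace_proj:
  assumes "\<psi> \<in> carrier_vec n"
  shows "mtrace (proj n \<psi>) = conjugate \<psi> \<bullet> \<psi>"
  using mtrace_mult_proj[OF one_carrier_mat assms] assms by simp

section \<open>Positive semidefinite matrices\<close>

lemma psd_carrier: "psd n A \<Longrightarrow> A \<in> carrier_mat n n"
  unfolding psd_def by auto

lemma conjugate_unit_vec [simp]: "conjugate (unit_vec n i :: complex vec) = unit_vec n i"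
  by (rule eq_vecI) (auto simp: unit_vec_def)

lemma mult_mat_vec_unit_vec:
  fixes A :: "'a :: semiring_1 mat"
  assumes "A \<in> carrier_mat m n" "i < n"
  shows "A *\<^sub>v unit_vec n i = col A i"
  by (rule eq_vecI) (use assms carrier_matD[OF assms(1)] in auto)

lemma quadratic_form_unit_vec:
  fixes A :: "complex mat"
  assumes A: "A \<in> carrier_mat n n" and i: "i < n"
  shows "conjugate (unit_vec n i) \<bullet> (A *\<^sub>v unit_vec n i) = A $$ (i,i)"
  using A i by (simp add: mult_mat_vec_unit_vec)

lemma quadratic_form_two_unit_vecs:
  fixes A :: "complex mat" and x y :: complex
  assumes A: "A \<in> carrier_mat n n" and i: "i < n" and j: "j < n"
  defines "v \<equiv> x \<cdot>\<^sub>v unit_vec n i + y \<cdot>\<^sub>v unit_vec n j"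
  shows "conjugate v \<bullet> (A *\<^sub>v v) =
    cnj x * (x * A $$ (i,i) + y * A $$ (i,j)) + cnj y * (x * A $$ (j,i) + y * A $$ (j,j))"
  using A i j
  by (simp add: v_def conjugate_add_vec[of _ n] conjugate_smult_vec mult_add_distrib_mat_vec[of _ n n]
      mult_mat_vec[of _ n n] mult_mat_vec_unit_vec add_scalar_prod_distrib[of _ n])

lemma psd_hermitian:
  assumes "psd n A"
  shows "mat_adjoint A = A"
proof -
  have A: "A \<in> carrier_mat n n" using assms by (rule psd_carrier)
  have real: "Im (conjugate v \<bullet> (A *\<^sub>v v)) = 0" if "v \<in> carrier_vec n" for v
    using assms that unfolding psd_def by auto
  have entry: "A $$ (i,j) = cnj (A $$ (j,i))" if i: "i < n" and j: "j < n" for i j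
  proof (cases "i = j")
    case True
    then show ?thesis
      using real[of "unit_vec n i"] quadratic_form_unit_vec[OF A i] by (simp add: complex_eq_iff)
  next
    case False
    have c: "Im (cnj x * (x * A $$ (i,i) + y * A $$ (i,j)) + cnj y * (x * A $$ (j,i) + y * A $$ (j,j))) = 0"
      for x y
      using real[of "x \<cdot>\<^sub>v unit_vec n i + y \<cdot>\<^sub>v unit_vec n j"] quadratic_form_two_unit_vecs[OF A i j]
      by auto
    have "Im (A $$ (i,i)) = 0" "Im (A $$ (j,j)) = 0" using c[of 1 0] c[of 0 1] by simp_all
    then have "Im (A $$ (i,j)) + Im (A $$ (j,i)) = 0" "Re (A $$ (i,j)) - Re (A $$ (j,i)) = 0"
      using c[of 1 1] c[of 1 \<i>] by (simp_all add: algebra_simps)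
    then show ?thesis by (simp add: complex_eq_iff)
  qed
  show ?thesis
  proof (rule eq_matI)
    fix i j assume "i < dim_row A" "j < dim_col A"
    then show "mat_adjoint A $$ (i,j) = A $$ (i,j)" using A entry[of j i] by simp
  qed (use A in auto)
qed

lemma psd_diag:
  assumes "psd n M" and i: "i < n"
  shows "Im (M $$ (i,i)) = 0" "Re (M $$ (i,i)) \<ge> 0"
  using assms quadratic_form_unit_vec[OF psd_carrier[OF assms(1)] i] unit_vec_carrier[of n i]
  unfolding psd_def by metis+

lemma psd_zero_diag:
  assumes P: "psd n M" and i: "i < n" and j: "j < n" and z: "M $$ (i,i) = 0"
  shows "M $$ (j,i) = 0" "M $$ (i,j) = 0"
proof -
  have M: "M \<in> carrier_mat n n" using P by (rule psd_carrier)
  have herm: "M $$ (i,j) = cnj (M $$ (j,i))"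
    using psd_hermitian[OF P] M i j index_mat_adjoint[of i M j] by auto
  show "M $$ (j,i) = 0"
  proof (cases "i = j")
    case False
    define z where "z = M $$ (j,i)"
    define s where "s = M $$ (j,j)"
    have q: "Re (cnj x * (x * M $$ (i,i) + y * M $$ (i,j)) + cnj y * (x * M $$ (j,i) + y * M $$ (j,j))) \<ge> 0"
      for x y
      using P quadratic_form_two_unit_vecs[OF M i j, of x y] unfolding psd_def
      by (metis add_carrier_vec smult_carrier_vec unit_vec_carrier)
    show ?thesis
    proof (rule ccontr)
      assume "M $$ (j,i) \<noteq> 0"
      then have cz: "(cmod z)\<^sup>2 > 0" unfolding z_def by simp
      \<comment> \<open>The quadratic form at \<open>- t cnj z e\<^sub>i + e\<^sub>j\<close> is \<open>Re s - 2 t \<bar>z\<bar>\<^sup>2\<close>, which is \<open>-1\<close> for this \<open>t\<close>.\<close>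
      define t where "t = (Re s + 1) / (2 * (cmod z)\<^sup>2)"
      have "0 \<le> Re (cnj (- (of_real t * cnj z)) * (1 * cnj z) + (- (of_real t * cnj z) * z + s))"
        using q[of "- (of_real t * cnj z)" 1] z herm unfolding z_def s_def by simp
      also have "\<dots> = Re s - 2 * t * (Re z * Re z + Im z * Im z)"
        by (simp add: algebra_simps)
      also have "Re z * Re z + Im z * Im z = (cmod z)\<^sup>2"
        using cmod_power2[of z] by (simp add: power2_eq_square)
      also have "Re s - 2 * t * (cmod z)\<^sup>2 = -1"
        unfolding t_def using cz by (simp add: field_simps)
      finally show False by simp
    qed
  qed (use z in simp)
  then show "M $$ (i,j) = 0" using herm by simp
qed

lemma psd_congruence:
  assumes P: "psd n M" and W: "W \<in> carrier_mat n m"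
  shows "psd m (mat_adjoint W * M * W)"
proof -
  have M: "M \<in> carrier_mat n n" using P by (rule psd_carrier)
  have "conjugate v \<bullet> ((mat_adjoint W * M * W) *\<^sub>v v) = conjugate (W *\<^sub>v v) \<bullet> (M *\<^sub>v (W *\<^sub>v v))"
    if v: "v \<in> carrier_vec m" for v
  proof -
    have "(mat_adjoint W * M * W) *\<^sub>v v = mat_adjoint W *\<^sub>v (M *\<^sub>v (W *\<^sub>v v))"
      using M W v
      by (simp add: assoc_mult_mat_vec[of _ m n _ m] assoc_mult_mat_vec[of _ m n _ n] mult_carrier_mat[of _ m n _ n])
    then show ?thesis
      using scalar_prod_mat_adjoint[OF W v, of "M *\<^sub>v (W *\<^sub>v v)"] M W v by simp
  qed
  moreover have "mat_adjoint W * M * W \<in> carrier_mat m m"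
    using M W by (metis mat_adjoint_carrier mult_carrier_mat)
  ultimately show ?thesis
    using P W unfolding psd_def by simp
qed

lemma psd_similar_mat_wit_unitary:
  assumes AB: "similar_mat_wit A B W (mat_adjoint W)" and P: "psd n A"
  shows "psd n B"
proof -
  have A: "A \<in> carrier_mat n n" using P by (rule psd_carrier)
  note w = similar_mat_witD2[OF A AB]
  have "B = mat_adjoint W * A * W"
    using similar_mat_witD2[OF w(5) similar_mat_wit_sym[OF AB]] w(6)
    by (simp add: assoc_mult_mat[of _ n n _ n _ n])
  then show ?thesis
    using psd_congruence[OF P w(6)] by simp
qed

lemma psd_nonneg_comb:
  fixes F :: "'l \<Rightarrow> complex mat"
  assumes S: "finite S" and c: "\<And>l. l \<in> S \<Longrightarrow> c l \<ge> 0" and F: "\<And>l. l \<in> S \<Longrightarrow> psd n (F l)"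
  shows "psd n (mat n n (\<lambda>(a,b). \<Sum>l\<in>S. complex_of_real (c l) * F l $$ (a,b)))"
    (is "psd n ?M")
proof -
  have Fc: "F l \<in> carrier_mat n n" if "l \<in> S" for l using F[OF that] by (rule psd_carrier)
  have "conjugate x \<bullet> (?M *\<^sub>v x) = (\<Sum>l\<in>S. complex_of_real (c l) * (conjugate x \<bullet> (F l *\<^sub>v x)))"
    if x: "x \<in> carrier_vec n" for x
  proof -
    have "conjugate x \<bullet> (?M *\<^sub>v x) =
        (\<Sum>a<n. \<Sum>b<n. \<Sum>l\<in>S. complex_of_real (c l) * (cnj (x $ a) * F l $$ (a,b) * x $ b))"
      using x by (simp add: scalar_prod_def atLeast0LessThan sum_distrib_left sum_distrib_right
          mult.assoc mult.left_commute)
    also have "\<dots> = (\<Sum>l\<in>S. \<Sum>a<n. \<Sum>b<n. complex_of_real (c l) * (cnj (x $ a) * F l $$ (a,b) * x $ b))"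
      by (subst sum.swap) (subst (2) sum.swap, rule refl)
    also have "\<dots> = (\<Sum>l\<in>S. complex_of_real (c l) * (conjugate x \<bullet> (F l *\<^sub>v x)))"
    proof (rule sum.cong)
      fix l assume "l \<in> S"
      with Fc x carrier_matD[OF Fc] show "(\<Sum>a<n. \<Sum>b<n. complex_of_real (c l) * (cnj (x $ a) * F l $$ (a,b) * x $ b)) =
          complex_of_real (c l) * (conjugate x \<bullet> (F l *\<^sub>v x))"
        by (simp add: scalar_prod_def atLeast0LessThan sum_distrib_left mult.assoc mult.left_commute)
    qed simp
    finally show ?thesis .
  qed
  moreover have "Im (conjugate x \<bullet> (F l *\<^sub>v x)) = 0" "Re (conjugate x \<bullet> (F l *\<^sub>v x)) \<ge> 0"
    if "l \<in> S" "x \<in> carrier_vec n" for l x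
    using F that unfolding psd_def by auto
  ultimately show ?thesis
    unfolding psd_def using c by (auto simp: Re_sum Im_sum intro!: sum_nonneg)
qed

lemma proj_mult_vec_eq:
  assumes "\<psi> \<in> carrier_vec n" "x \<in> carrier_vec n"
  shows "proj n \<psi> *\<^sub>v x = (conjugate \<psi> \<bullet> x) \<cdot>\<^sub>v \<psi>"
  by (rule eq_vecI)
    (use assms in \<open>auto simp: scalar_prod_def atLeast0LessThan sum_distrib_left sum_distrib_right ac_simps\<close>)

lemma psd_proj:
  assumes \<psi>: "\<psi> \<in> carrier_vec n"
  shows "psd n (proj n \<psi>)"
proof -
  have "conjugate x \<bullet> (proj n \<psi> *\<^sub>v x) = (conjugate \<psi> \<bullet> x) * cnj (conjugate \<psi> \<bullet> x)"
    if x: "x \<in> carrier_vec n" for x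
  proof -
    have "conjugate x \<bullet> \<psi> = cnj (conjugate \<psi> \<bullet> x)"
      using \<psi> x by (simp add: scalar_prod_def atLeast0LessThan cnj_sum mult.commute)
    then show ?thesis
      using \<psi> x by (simp add: proj_mult_vec_eq)
  qed
  then show ?thesis unfolding psd_def by (simp add: complex_mult_cnj)
qed

lemma psd_eq_proj_unit_vec:
  assumes P: "psd n \<sigma>" and tr: "mtrace \<sigma> = 1" and i0: "i0 < n"
    and zero: "\<And>i. i < n \<Longrightarrow> i \<noteq> i0 \<Longrightarrow> \<sigma> $$ (i,i) = 0"
  shows "\<sigma> = proj n (unit_vec n i0)"
proof (rule eq_matI)
  have \<sigma>: "\<sigma> \<in> carrier_mat n n" using P by (rule psd_carrier)
  fix a b assume "a < dim_row (proj n (unit_vec n i0))" "b < dim_col (proj n (unit_vec n i0))"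
  then have a: "a < n" and b: "b < n" by auto
  have "\<sigma> $$ (i0,i0) = mtrace \<sigma>"
    using \<sigma> i0 zero by (simp add: mtrace_def sum.remove[of "{..<n}" i0])
  then show "\<sigma> $$ (a,b) = proj n (unit_vec n i0) $$ (a,b)"
    using psd_zero_diag[OF P _ _ zero] a b i0 tr by (cases "a = i0"; cases "b = i0") auto
qed (use psd_carrier[OF P] in auto)

section \<open>Unitary diagonalisation of Hermitian matrices\<close>

text \<open>The Gram--Schmidt process of the library yields orthogonal but not normalised columns.\<close>

lemma corthogonal_mat_normalize:
  fixes W :: "complex mat"
  assumes W: "W \<in> carrier_mat n n" and orth: "corthogonal_mat W"
  shows "\<exists>f. unitary_mat n (W * mat_diag n f)"
proof -
  define N where "N = mat_adjoint W * W"
  have N: "diagonal_mat N" "\<And>i. i < n \<Longrightarrow> N $$ (i,i) \<noteq> 0"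
    using orth W unfolding N_def corthogonal_mat_def Let_def by auto
  define s where "s i = (\<Sum>a<n. (Re (W $$ (a,i)))\<^sup>2 + (Im (W $$ (a,i)))\<^sup>2)" for i
  have Nii: "N $$ (i,i) = complex_of_real (s i)" if "i < n" for i
    using W that unfolding N_def s_def
    by (simp add: scalar_prod_def atLeast0LessThan complex_mult_cnj mult.commute)
  have s: "s i > 0" if "i < n" for i
  proof -
    have "s i \<ge> 0" unfolding s_def by (intro sum_nonneg) simp
    moreover have "s i \<noteq> 0" using N(2)[OF that] Nii[OF that] by auto
    ultimately show ?thesis by simp
  qed
  define f where "f i = complex_of_real (1 / sqrt (s i))" for i
  have "mat_adjoint (W * mat_diag n f) * (W * mat_diag n f) = mat_diag n (\<lambda>i. cnj (f i)) * N * mat_diag n f"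
    unfolding N_def using W
    by (simp add: mat_adjoint_mult[of W n n "mat_diag n f" n] mat_adjoint_mat_diag assoc_mult_mat[of _ n n _ n _ n])
  also have "\<dots> = 1\<^sub>m n"
  proof (rule eq_matI)
    fix i j assume "i < dim_row (1\<^sub>m n :: complex mat)" "j < dim_col (1\<^sub>m n :: complex mat)"
    then have i: "i < n" and j: "j < n" by auto
    have "(mat_diag n (\<lambda>i. cnj (f i)) * N * mat_diag n f) $$ (i,j) = cnj (f i) * N $$ (i,j) * f j"
      using W i j by (simp add: N_def mat_diag_mult_left[of _ n n] mat_diag_mult_right[of _ n n])
    also have "\<dots> = 1\<^sub>m n $$ (i,j)"
      using N(1) Nii[OF i] s[OF i] i j W unfolding diagonal_mat_def N_def f_def
      by (auto simp flip: of_real_mult simp: real_sqrt_mult[symmetric])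
    finally show "(mat_diag n (\<lambda>i. cnj (f i)) * N * mat_diag n f) $$ (i,j) = 1\<^sub>m n $$ (i,j)" .
  qed (use W in \<open>auto simp: N_def\<close>)
  finally show ?thesis using W by (intro exI[of _ f] unitary_matI) simp_all
qed

lemma unitary_mat_first_col:
  assumes v: "v \<in> carrier_vec n" and v0: "v \<noteq> 0\<^sub>v n"
  shows "\<exists>W c. unitary_mat n W \<and> col W 0 = c \<cdot>\<^sub>v v"
proof -
  interpret cof_vec_space n "TYPE(complex)" .
  define ws where "ws = gram_schmidt n (basis_completion v)"
  note b = basis_completion[OF v v0]
  have ws: "corthogonal ws" "set ws \<subseteq> carrier_vec n" "length ws = n"
    using gram_schmidt_result[OF b(2,4,5) ws_def] b(6) by auto
  have n: "n \<noteq> 0" using v v0 by auto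
  then obtain vs where "basis_completion v = v # vs"
    using b(6,7) by (cases "basis_completion v") auto
  then have ws0: "ws ! 0 = v"
    using gram_schmidt_hd[OF v, of vs] ws(3) n unfolding ws_def
    by (metis hd_conv_nth length_0_conv)
  define W where "W = mat_of_cols n ws"
  have W: "W \<in> carrier_mat n n" unfolding W_def using ws(3) by auto
  obtain f where "unitary_mat n (W * mat_diag n f)"
    using corthogonal_mat_normalize[OF W orthogonal_mat_of_cols[OF ws(2,1,3), folded W_def]] by blast
  moreover have "col (W * mat_diag n f) 0 = f 0 \<cdot>\<^sub>v v"
  proof -
    have "col W 0 = v" using ws ws0 v n unfolding W_def by (simp add: col_mat_of_cols)
    then have "W $$ (i,0) = v $ i" if "i < n" for i
      using W that n index_col[of i W 0] by auto
    then show ?thesis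
      using W v n by (intro eq_vecI) (auto simp: mat_diag_mult_right[of _ n n])
  qed
  ultimately show ?thesis by blast
qed

lemma four_block_mat_diag:
  "four_block_mat (mat_diag 1 (\<lambda>_. a)) (0\<^sub>m 1 m) (0\<^sub>m m 1) (mat_diag m f) =
    mat_diag (Suc m) (\<lambda>i. if i = 0 then a else f (i - 1))"
  by (rule eq_matI) (auto simp: mat_diag_def)

lemma hermitian_deflation:
  fixes A :: "complex mat"
  assumes A: "A \<in> carrier_mat (Suc m) (Suc m)" and herm: "mat_adjoint A = A"
    and col0: "col A 0 = e \<cdot>\<^sub>v unit_vec (Suc m) 0"
  shows "\<exists>B. B \<in> carrier_mat m m \<and> mat_adjoint B = B \<and> e \<in> \<real> \<and>
    A = four_block_mat (mat_diag 1 (\<lambda>_. e)) (0\<^sub>m 1 m) (0\<^sub>m m 1) B"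
proof -
  have c: "A $$ (i,0) = (if i = 0 then e else 0)" if "i < Suc m" for i
    using A that arg_cong[OF col0, of "\<lambda>x. x $ i"] by auto
  have r: "A $$ (0,j) = (if j = 0 then cnj e else 0)" if j: "j < Suc m" for j
  proof -
    have "A $$ (0,j) = cnj (A $$ (j,0))"
      using A j index_mat_adjoint[of 0 A j] by (simp add: herm)
    then show ?thesis using c[OF j] by simp
  qed
  have e: "e \<in> \<real>" using c[of 0] r[of 0] by (simp add: Reals_cnj_iff)
  define B where "B = mat m m (\<lambda>(i,j). A $$ (Suc i, Suc j))"
  have "mat_adjoint B = B"
  proof (rule eq_matI)
    fix i j assume "i < dim_row B" "j < dim_col B"
    then have i: "i < m" and j: "j < m" unfolding B_def by auto
    have "mat_adjoint B $$ (i,j) = mat_adjoint A $$ (Suc i, Suc j)"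
      using A i j unfolding B_def by simp
    then show "mat_adjoint B $$ (i,j) = B $$ (i,j)" using i j unfolding B_def herm by simp
  qed (auto simp: B_def)
  moreover have "A = four_block_mat (mat_diag 1 (\<lambda>_. e)) (0\<^sub>m 1 m) (0\<^sub>m m 1) B"
  proof (rule eq_matI)
    fix i j assume "i < dim_row (four_block_mat (mat_diag 1 (\<lambda>_. e)) (0\<^sub>m 1 m) (0\<^sub>m m 1) B)"
      "j < dim_col (four_block_mat (mat_diag 1 (\<lambda>_. e)) (0\<^sub>m 1 m) (0\<^sub>m m 1) B)"
    then have i: "i < Suc m" and j: "j < Suc m" by (auto simp: B_def mat_diag_def)
    show "A $$ (i,j) = four_block_mat (mat_diag 1 (\<lambda>_. e)) (0\<^sub>m 1 m) (0\<^sub>m m 1) B $$ (i,j)"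
      using c[OF i] r[OF j] e i j by (cases i; cases j) (auto simp: B_def mat_diag_def Reals_cnj_iff)
  qed (use A in \<open>auto simp: B_def mat_diag_def\<close>)
  moreover have "B \<in> carrier_mat m m" unfolding B_def by simp
  ultimately show ?thesis using e by blast
qed

lemma eigenvector_exists:
  fixes A :: "complex mat"
  assumes A: "A \<in> carrier_mat n n" and "n > 0"
  shows "\<exists>v e. eigenvector A v e"
proof -
  obtain as where "char_poly A = (\<Prod>a\<leftarrow>as. [:- a, 1:])" "length as = n"
    using char_poly_factorized[OF A] by blast
  then obtain e where "poly (char_poly A) e = 0"
    using \<open>n > 0\<close> by (cases as) auto
  then show ?thesis
    using find_eigenvector[OF A] eigenvalue_root_char_poly[OF A] by blast
qed

lemma hermitian_unitary_deflation:
  fixes A :: "complex mat"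
  assumes A: "A \<in> carrier_mat (Suc m) (Suc m)" and herm: "mat_adjoint A = A"
  shows "\<exists>W e B. unitary_mat (Suc m) W \<and> B \<in> carrier_mat m m \<and> mat_adjoint B = B \<and> e \<in> \<real> \<and>
    mat_adjoint W * A * W = four_block_mat (mat_diag 1 (\<lambda>_. e)) (0\<^sub>m 1 m) (0\<^sub>m m 1) B"
proof -
  obtain v e where "eigenvector A v e"
    using eigenvector_exists[OF A] by blast
  then have v: "v \<in> carrier_vec (Suc m)" "v \<noteq> 0\<^sub>v (Suc m)" and Av: "A *\<^sub>v v = e \<cdot>\<^sub>v v"
    using A unfolding eigenvector_def by auto
  obtain W c where W: "unitary_mat (Suc m) W" and Wcol: "col W 0 = c \<cdot>\<^sub>v v"
    using unitary_mat_first_col[OF v] by blast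
  have Wc: "W \<in> carrier_mat (Suc m) (Suc m)" "mat_adjoint W * W = 1\<^sub>m (Suc m)"
    using W unfolding unitary_mat_def by auto
  define A' where "A' = mat_adjoint W * A * W"
  have A': "A' \<in> carrier_mat (Suc m) (Suc m)" unfolding A'_def using A Wc by simp
  have "mat_adjoint A' = A'"
    unfolding A'_def using A Wc herm
    by (simp add: mat_adjoint_mult[of _ "Suc m" "Suc m" _ "Suc m"] assoc_mult_mat[of _ "Suc m" "Suc m" _ "Suc m" _ "Suc m"])
  moreover have "col A' 0 = e \<cdot>\<^sub>v unit_vec (Suc m) 0"
  proof -
    have "A *\<^sub>v col W 0 = e \<cdot>\<^sub>v col W 0"
      unfolding Wcol using A v Av by (simp add: mult_mat_vec smult_smult_assoc mult.commute)
    then have "col A' 0 = mat_adjoint W *\<^sub>v (e \<cdot>\<^sub>v col W 0)"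
      unfolding A'_def using A Wc carrier_vecI[of "col W 0" "Suc m"]
      by (simp add: col_mult2[of _ "Suc m" "Suc m"] assoc_mult_mat_vec[of _ "Suc m" "Suc m" _ "Suc m"])
    also have "\<dots> = e \<cdot>\<^sub>v col (mat_adjoint W * W) 0"
      using Wc mult_mat_vec[of "mat_adjoint W" "Suc m" "Suc m" "col W 0" e]
        col_mult2[of "mat_adjoint W" "Suc m" "Suc m" W "Suc m" 0] col_carrier_vec[of 0 "Suc m" W] by simp
    finally show ?thesis using Wc by simp
  qed
  ultimately show ?thesis
    using hermitian_deflation[OF A'] W unfolding A'_def by blast
qed

lemma similar_mat_wit_four_block_diag:
  fixes B :: "complex mat"
  assumes B: "B \<in> carrier_mat m m" and sim: "similar_mat_wit B (mat_diag m d) V (mat_adjoint V)"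
  defines "P \<equiv> four_block_mat (1\<^sub>m 1) (0\<^sub>m 1 m) (0\<^sub>m m 1) V"
  shows "similar_mat_wit (four_block_mat (mat_diag 1 (\<lambda>_. a)) (0\<^sub>m 1 m) (0\<^sub>m m 1) B)
    (mat_diag (Suc m) (\<lambda>i. if i = 0 then a else d (i - 1))) P (mat_adjoint P)"
proof -
  have V: "V \<in> carrier_mat m m" using similar_mat_witD2[OF B sim] by auto
  have "mat_adjoint P = four_block_mat (1\<^sub>m 1) (0\<^sub>m 1 m) (0\<^sub>m m 1) (mat_adjoint V)"
    unfolding P_def using V
    by (simp add: mat_adjoint_four_block_mat[OF one_carrier_mat zero_carrier_mat zero_carrier_mat V])
  then show ?thesis
    unfolding P_def four_block_mat_diag[symmetric] using B V
    by (auto intro!: similar_mat_wit_four_block[OF similar_mat_wit_refl sim])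
qed

theorem hermitian_unitary_diagonalization:
  fixes A :: "complex mat"
  assumes "A \<in> carrier_mat n n" and "mat_adjoint A = A"
  shows "\<exists>W r. similar_mat_wit A (mat_diag n (\<lambda>i. complex_of_real (r i))) W (mat_adjoint W)"
  using assms
proof (induction n arbitrary: A)
  case 0
  then have "A = 1\<^sub>m 0 * mat_diag 0 (\<lambda>i. 0) * mat_adjoint (1\<^sub>m 0)"
    by (intro eq_matI) auto
  then have "similar_mat_wit A (mat_diag 0 (\<lambda>i. complex_of_real 0)) (1\<^sub>m 0) (mat_adjoint (1\<^sub>m 0))"
    using 0 by (intro similar_mat_witI[of _ _ 0]) auto
  then show ?case by (intro exI[of _ "1\<^sub>m 0"] exI[of _ "\<lambda>_. 0"])
next
  case (Suc m)
  obtain W e B where W: "unitary_mat (Suc m) W" and B: "B \<in> carrier_mat m m" "mat_adjoint B = B"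
    and e: "e \<in> \<real>" and WAW: "mat_adjoint W * A * W = four_block_mat (mat_diag 1 (\<lambda>_. e)) (0\<^sub>m 1 m) (0\<^sub>m m 1) B"
    using hermitian_unitary_deflation[OF Suc.prems] by blast
  obtain V r where "similar_mat_wit B (mat_diag m (\<lambda>i. complex_of_real (r i))) V (mat_adjoint V)"
    using Suc.IH[OF B] by blast
  from similar_mat_wit_four_block_diag[OF B(1) this, of e, folded WAW]
  obtain P where sim: "similar_mat_wit (mat_adjoint W * A * W)
      (mat_diag (Suc m) (\<lambda>i. if i = 0 then e else complex_of_real (r (i - 1)))) P (mat_adjoint P)"
    by blast
  define r' where "r' i = (if i = 0 then Re e else r (i - 1))" for i
  have "complex_of_real (Re e) = e" using e by (simp add: complex_eq_iff complex_is_Real_iff)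
  then have diag: "(\<lambda>i. if i = 0 then e else complex_of_real (r (i - 1))) = (\<lambda>i. complex_of_real (r' i))"
    unfolding r'_def by auto
  have Wc: "W \<in> carrier_mat (Suc m) (Suc m)" using W unfolding unitary_mat_def by auto
  have "mat_adjoint W * A * W \<in> carrier_mat (Suc m) (Suc m)" using Wc Suc.prems(1) by simp
  then have P: "P \<in> carrier_mat (Suc m) (Suc m)" by (rule similar_mat_witD2(6)[OF _ sim])
  have "mat_adjoint P * mat_adjoint W = mat_adjoint (W * P)"
    by (rule mat_adjoint_mult[OF Wc P, symmetric])
  then have "similar_mat_wit A (mat_diag (Suc m) (\<lambda>i. complex_of_real (r' i))) (W * P) (mat_adjoint (W * P))"
    using similar_mat_wit_trans[OF similar_mat_wit_unitary[OF W Suc.prems(1)] sim] unfolding diag by simp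
  then show ?case by blast
qed

section \<open>The second largest eigenvalue\<close>

lemma order_linear_factors:
  fixes xs :: "'a :: idom list"
  shows "order a (\<Prod>x\<leftarrow>xs. [:- x, 1:]) = count (mset xs) a"
proof (induction xs)
  case Nil
  then show ?case by (simp add: order_0I)
next
  case (Cons x xs)
  have "monic (\<Prod>x\<leftarrow>xs. [:- x, 1:])" by (rule monic_prod_list) auto
  then have "[:- x, 1:] * (\<Prod>x\<leftarrow>xs. [:- x, 1:]) \<noteq> 0" by (intro no_zero_divisors) auto
  then have "order a ([:- x, 1:] * (\<Prod>x\<leftarrow>xs. [:- x, 1:])) = order a [:- x, 1:] + order a (\<Prod>x\<leftarrow>xs. [:- x, 1:])"
    by (rule order_mult)
  then show ?case using Cons by (simp add: order_linear')
qed

lemma mset_eq_if_linear_factors_eq: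
  fixes xs ys :: "'a :: idom list"
  assumes "(\<Prod>x\<leftarrow>xs. [:- x, 1:]) = (\<Prod>x\<leftarrow>ys. [:- x, 1:])"
  shows "mset xs = mset ys"
  using assms by (metis multiset_eqI order_linear_factors)

lemma mset_eq_if_real_linear_factors_eq:
  fixes xs ys :: "real list"
  assumes "(\<Prod>x\<leftarrow>xs. [:- complex_of_real x, 1:]) = (\<Prod>x\<leftarrow>ys. [:- complex_of_real x, 1:])"
  shows "mset xs = mset ys"
proof -
  have "mset (map complex_of_real xs) = mset (map complex_of_real ys)"
    using assms by (intro mset_eq_if_linear_factors_eq) (simp add: o_def)
  then have "image_mset Re (mset (map complex_of_real xs)) = image_mset Re (mset (map complex_of_real ys))"
    by simp
  then show ?thesis by (simp add: multiset.map_comp o_def)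
qed

lemma char_poly_mat_diag: "char_poly (mat_diag n d) = (\<Prod>x\<leftarrow>map d [0..<n]. [:- x, 1:])"
proof -
  have ut: "upper_triangular (mat_diag n d)" and dg: "diag_mat (mat_diag n d) = map d [0..<n]"
    by (auto simp: upper_triangular_def diag_mat_def mat_diag_def intro: nth_equalityI)
  show ?thesis
    using char_poly_upper_triangular[OF mat_diag_dim ut] unfolding dg .
qed

lemma sorted_wrt_ge_nth_1:
  fixes xs :: "'a :: linorder list"
  assumes sorted: "sorted_wrt (\<ge>) xs" and le: "\<forall>x\<in>set xs. x \<le> c" and twice: "count (mset xs) c \<ge> 2"
  shows "xs ! 1 = c"
proof -
  obtain a ys where xs: "xs = a # ys" using twice by (cases xs) auto
  then have "count (mset xs) c \<le> count (mset ys) c + 1" by simp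
  then have "count (mset ys) c \<noteq> 0" using twice by linarith
  then have "c \<in> set ys" by (metis count_mset_0_iff)
  then obtain k where k: "k < length ys" "ys ! k = c" by (metis in_set_conv_nth)
  have "ys ! 0 \<ge> ys ! k"
    using sorted_wrt_nth_less[OF sorted, of 1 "Suc k"] k xs by (cases k) auto
  moreover have "ys ! 0 \<le> c" using le k xs by (cases ys) auto
  ultimately show ?thesis using k xs by simp
qed

lemma second_eig_eq_one:
  fixes \<Omega> :: "complex mat"
  assumes sim: "similar_mat_wit \<Omega> (mat_diag n (\<lambda>i. complex_of_real (r i))) P Q"
    and le: "\<And>i. i < n \<Longrightarrow> r i \<le> 1"
    and ij: "i < n" "j < n" "i \<noteq> j" "r i = 1" "r j = 1"
  shows "second_eig \<Omega> = 1"
proof -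
  define rs where "rs = map r [0..<n]"
  have "char_poly \<Omega> = char_poly (mat_diag n (\<lambda>i. complex_of_real (r i)))"
    using sim by (intro char_poly_similar) (auto simp: similar_mat_def)
  then have cp: "char_poly \<Omega> = (\<Prod>x\<leftarrow>rs. [:- complex_of_real x, 1:])"
    unfolding char_poly_mat_diag rs_def by (simp add: o_def)
  have "card {k. k < n \<and> r k = 1} \<ge> 2"
    using card_mono[of "{k. k < n \<and> r k = 1}" "{i, j}"] ij by auto
  moreover have "count (mset rs) 1 = card {k. k < n \<and> r k = 1}"
    unfolding rs_def count_mset count_list_eq_length_filter length_filter_conv_card
    by (auto intro!: arg_cong[where f = card])
  ultimately have twice: "count (mset rs) 1 \<ge> 2" by simp
  have second: "es ! 1 = 1"
    if es: "char_poly \<Omega> = (\<Prod>x\<leftarrow>es. [:- complex_of_real x, 1:])" and sorted: "sorted_wrt (\<ge>) es"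
    for es :: "real list"
  proof -
    have mset: "mset es = mset rs" using es cp by (intro mset_eq_if_real_linear_factors_eq) simp
    have "\<forall>x\<in>set es. x \<le> 1" using le mset_eq_setD[OF mset] unfolding rs_def by auto
    then show ?thesis using sorted_wrt_ge_nth_1[OF sorted] twice unfolding mset by blast
  qed
  define es0 where "es0 = rev (sort rs)"
  have "mset es0 = mset rs" unfolding es0_def by simp
  then have "(\<Prod>x\<leftarrow>es0. [:- complex_of_real x, 1:]) = (\<Prod>x\<leftarrow>rs. [:- complex_of_real x, 1:])"
    by (simp flip: prod_mset_prod_list)
  moreover have "sorted_wrt (\<ge>) es0" unfolding es0_def by (simp add: sorted_wrt_rev)
  ultimately have "\<exists>es :: real list. char_poly \<Omega> = (\<Prod>x\<leftarrow>es. [:- complex_of_real x, 1:]) \<and>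
      sorted_wrt (\<ge>) es \<and> 1 = es ! 1"
    using second[of es0] cp by (intro exI[of _ es0]) simp
  moreover have "dim_row \<Omega> = n"
    using similar_mat_witD(5)[OF refl sim] mat_diag_dim[of n] by (metis carrier_matD(1))
  then have "dim_row \<Omega> \<ge> 2" using ij(1-3) by linarith
  ultimately show ?thesis
    unfolding second_eig_def using second by (auto intro!: the_equality)
qed

section \<open>States accepted with certainty\<close>

lemma index_mat_diag_mult_vec:
  fixes d :: "nat \<Rightarrow> 'a :: comm_ring_1"
  assumes "k < n" "v \<in> carrier_vec n"
  shows "(mat_diag n d *\<^sub>v v) $ k = d k * v $ k"
proof -
  have "row (mat_diag n d) k = d k \<cdot>\<^sub>v unit_vec n k"
    using assms by (intro eq_vecI) (auto simp: mat_diag_def)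
  then show ?thesis using assms by (simp add: mat_diag_def[symmetric])
qed

lemma mtrace_mat_diag_mult:
  assumes "\<sigma> \<in> carrier_mat n n"
  shows "mtrace (mat_diag n d * \<sigma>) = (\<Sum>i<n. d i * \<sigma> $$ (i,i))"
  using assms by (simp add: mtrace_def mat_diag_mult_left[of _ n n])

lemma diag_zero_if_weighted_trace_eq:
  fixes \<sigma> :: "complex mat"
  assumes P: "psd n \<sigma>" and le: "\<And>i. i < n \<Longrightarrow> r i \<le> 1"
    and tr: "mtrace (mat_diag n (\<lambda>i. complex_of_real (r i)) * \<sigma>) = mtrace \<sigma>"
    and i: "i < n" "r i \<noteq> 1"
  shows "\<sigma> $$ (i,i) = 0"
proof -
  have \<sigma>: "\<sigma> \<in> carrier_mat n n" using P by (rule psd_carrier)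
  define s where "s k = Re (\<sigma> $$ (k,k))" for k
  have diag: "\<sigma> $$ (k,k) = complex_of_real (s k)" "s k \<ge> 0" if "k < n" for k
    using psd_diag[OF P that] unfolding s_def by (simp_all add: complex_eq_iff)
  have "complex_of_real (\<Sum>k<n. (1 - r k) * s k) = mtrace \<sigma> - mtrace (mat_diag n (\<lambda>i. complex_of_real (r i)) * \<sigma>)"
    unfolding mtrace_mat_diag_mult[OF \<sigma>] using \<sigma> diag
    by (simp add: mtrace_def sum_subtractf left_diff_distrib)
  then have "complex_of_real (\<Sum>k<n. (1 - r k) * s k) = 0" using tr by simp
  then have "(\<Sum>k<n. (1 - r k) * s k) = 0" by (simp only: of_real_eq_0_iff)
  then have "(1 - r i) * s i = 0"
    using sum_nonneg_eq_0_iff[of "{..<n}" "\<lambda>k. (1 - r k) * s k"] le diag(2) i(1) by auto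
  then show ?thesis using i diag(1)[OF i(1)] by simp
qed

lemma accepted_state_eq_proj_diag:
  fixes \<sigma> :: "complex mat" and y :: "complex vec" and r :: "nat \<Rightarrow> real" and n :: nat
  defines "D \<equiv> mat_diag n (\<lambda>i. complex_of_real (r i))"
  assumes P: "psd n \<sigma>" and tr: "mtrace \<sigma> = 1" "mtrace (D * \<sigma>) = 1"
    and le: "\<And>i. i < n \<Longrightarrow> r i \<le> 1"
    and simple: "\<And>i j. i < n \<Longrightarrow> j < n \<Longrightarrow> r i = 1 \<Longrightarrow> r j = 1 \<Longrightarrow> i = j"
    and y: "y \<in> carrier_vec n" "conjugate y \<bullet> y = 1" "D *\<^sub>v y = y"
  shows "\<sigma> = proj n y"
proof -
  have ry: "r k = 1" if k: "k < n" "y $ k \<noteq> 0" for k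
  proof -
    have "complex_of_real (r k) * y $ k = (D *\<^sub>v y) $ k"
      unfolding D_def by (rule index_mat_diag_mult_vec[OF k(1) y(1), symmetric])
    also have "\<dots> = 1 * y $ k" using y(3) by simp
    finally show ?thesis using k(2) by (metis mult_cancel_right of_real_eq_1_iff)
  qed
  have "\<exists>i0<n. y $ i0 \<noteq> 0"
  proof (rule ccontr)
    assume "\<not> (\<exists>i0<n. y $ i0 \<noteq> 0)"
    then have "conjugate y \<bullet> y = 0" using y(1) by (auto simp: scalar_prod_def)
    then show False using y(2) by simp
  qed
  then obtain i0 where i0: "i0 < n" "y $ i0 \<noteq> 0" by blast
  have y0: "y $ k = 0" if "k < n" "k \<noteq> i0" for k
    using simple[OF that(1) i0(1) ry[OF that(1)] ry[OF i0]] that by auto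
  have "\<sigma> = proj n (unit_vec n i0)"
  proof (rule psd_eq_proj_unit_vec[OF P tr(1) i0(1)])
    fix k assume "k < n" "k \<noteq> i0"
    moreover have "r k \<noteq> 1" using simple[of k i0] ry[OF i0] i0(1) \<open>k < n\<close> \<open>k \<noteq> i0\<close> by auto
    ultimately show "\<sigma> $$ (k,k) = 0"
      using diag_zero_if_weighted_trace_eq[of n \<sigma> r k] P le tr unfolding D_def by simp
  qed
  also have "\<dots> = proj n y"
    by (rule psd_eq_proj_unit_vec[OF psd_proj[OF y(1)] _ i0(1), symmetric])
      (use y mtrace_proj[OF y(1)] y0 in auto)
  finally show ?thesis .
qed

lemma effect_unitary_diagonalization:
  fixes \<Omega> :: "complex mat"
  assumes \<Omega>: "psd n \<Omega>" "psd n (1\<^sub>m n - \<Omega>)"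
  shows "\<exists>W r. similar_mat_wit \<Omega> (mat_diag n (\<lambda>i. complex_of_real (r i))) W (mat_adjoint W) \<and>
    (\<forall>i<n. r i \<le> 1)"
proof -
  have \<Omega>c: "\<Omega> \<in> carrier_mat n n" using \<Omega>(1) by (rule psd_carrier)
  obtain W r where sim: "similar_mat_wit \<Omega> (mat_diag n (\<lambda>i. complex_of_real (r i))) W (mat_adjoint W)"
    using hermitian_unitary_diagonalization[OF \<Omega>c psd_hermitian[OF \<Omega>(1)]] by blast
  have "psd n (1\<^sub>m n - mat_diag n (\<lambda>i. complex_of_real (r i)))"
    by (rule psd_similar_mat_wit_unitary[OF similar_mat_wit_one_minus[OF sim \<Omega>c] \<Omega>(2)])
  then have "0 \<le> Re ((1\<^sub>m n - mat_diag n (\<lambda>i. complex_of_real (r i))) $$ (i,i))" if "i < n" for i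
    using psd_diag(2) that by blast
  then have "r i \<le> 1" if "i < n" for i
    using that by (simp add: mat_diag_def)
  then show ?thesis using sim by blast
qed

lemma similar_mat_wit_unitary_fixed_vec:
  fixes A B W :: "complex mat"
  assumes sim: "similar_mat_wit A B W (mat_adjoint W)" and A: "A \<in> carrier_mat n n"
    and \<phi>: "\<phi> \<in> carrier_vec n" "A *\<^sub>v \<phi> = \<phi>"
  shows "B *\<^sub>v (mat_adjoint W *\<^sub>v \<phi>) = mat_adjoint W *\<^sub>v \<phi>"
proof -
  note w = similar_mat_witD2[OF A sim]
  have W: "unitary_mat n W" using w unfolding unitary_mat_def by auto
  have "B = mat_adjoint W * A * W"
    using similar_mat_witD2[OF w(5) similar_mat_wit_sym[OF sim]] w(6) A
    by (simp add: assoc_mult_mat[of _ n n _ n _ n])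
  also have "\<dots> *\<^sub>v (mat_adjoint W *\<^sub>v \<phi>) = mat_adjoint W *\<^sub>v (A *\<^sub>v \<phi>)"
    using w(6) A \<phi>(1) mult_mat_vec_carrier[OF mat_adjoint_carrier[OF w(6)] \<phi>(1)]
      assoc_mult_mat_vec[of "mat_adjoint W * A" n n W n "mat_adjoint W *\<^sub>v \<phi>"]
      assoc_mult_mat_vec[of "mat_adjoint W" n n A n \<phi>] unitary_mat_mult_vec_cancel(1)[OF W \<phi>(1)]
    by simp
  finally show ?thesis using \<phi>(2) by simp
qed

lemma accepted_state_eq_proj:
  fixes \<Omega> \<rho> :: "complex mat" and \<phi> :: "complex vec"
  assumes \<Omega>: "psd n \<Omega>" "psd n (1\<^sub>m n - \<Omega>)" and gap: "second_eig \<Omega> < 1"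
    and \<phi>: "\<phi> \<in> carrier_vec n" "conjugate \<phi> \<bullet> \<phi> = 1" "\<Omega> *\<^sub>v \<phi> = \<phi>"
    and \<rho>: "psd n \<rho>" "mtrace \<rho> = 1" "mtrace (\<Omega> * \<rho>) = 1"
  shows "\<rho> = proj n \<phi>"
proof -
  have \<Omega>c: "\<Omega> \<in> carrier_mat n n" and \<rho>c: "\<rho> \<in> carrier_mat n n"
    using \<Omega>(1) \<rho>(1) by (simp_all add: psd_carrier)
  obtain W r where sim: "similar_mat_wit \<Omega> (mat_diag n (\<lambda>i. complex_of_real (r i))) W (mat_adjoint W)"
    and le: "\<And>i. i < n \<Longrightarrow> r i \<le> 1"
    using effect_unitary_diagonalization[OF \<Omega>] by blast
  have Wc: "W \<in> carrier_mat n n" and W: "unitary_mat n W"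
    using similar_mat_witD2[OF \<Omega>c sim] unfolding unitary_mat_def by auto
  have simple: "i = j" if "i < n" "j < n" "r i = 1" "r j = 1" for i j
    using second_eig_eq_one[OF sim le that(1,2) _ that(3,4)] gap by (cases "i = j") auto
  define \<sigma> where "\<sigma> = mat_adjoint W * \<rho> * W"
  have sim\<rho>: "similar_mat_wit \<rho> \<sigma> W (mat_adjoint W)"
    unfolding \<sigma>_def by (rule similar_mat_wit_unitary[OF W \<rho>c])
  define y where "y = mat_adjoint W *\<^sub>v \<phi>"
  have y: "y \<in> carrier_vec n"
    unfolding y_def by (rule mult_mat_vec_carrier[OF mat_adjoint_carrier[OF Wc] \<phi>(1)])
  have "\<sigma> = proj n y"
  proof (rule accepted_state_eq_proj_diag[OF _ _ _ le simple y])
    show "psd n \<sigma>" by (rule psd_similar_mat_wit_unitary[OF sim\<rho> \<rho>(1)])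
    show "mtrace \<sigma> = 1" using mtrace_similar_mat_wit[OF sim\<rho>] \<rho>(2) by simp
    show "mtrace (mat_diag n (\<lambda>i. complex_of_real (r i)) * \<sigma>) = 1"
      using mtrace_similar_mat_wit[OF similar_mat_wit_mult[OF sim sim\<rho>]] \<rho>(3) by simp
    show "conjugate y \<bullet> y = 1"
      using unitary_mat_norm[OF unitary_mat_adjoint[OF W] \<phi>(1)] \<phi>(2) unfolding y_def by simp
    show "mat_diag n (\<lambda>i. complex_of_real (r i)) *\<^sub>v y = y"
      unfolding y_def by (rule similar_mat_wit_unitary_fixed_vec[OF sim \<Omega>c \<phi>(1,3)])
  qed
  then have "\<rho> = W * proj n y * mat_adjoint W"
    using similar_mat_witD2[OF \<rho>c sim\<rho>] by simp
  also have "\<dots> = proj n \<phi>"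
    using proj_mult_vec[OF Wc y] unitary_mat_mult_vec_cancel(1)[OF W \<phi>(1)] by (simp add: y_def)
  finally show ?thesis .
qed

section \<open>Verification protocols\<close>

lemma quantum_channel_psd:
  assumes ch: "quantum_channel n \<Lambda>" and X: "psd n X"
  shows "psd n (\<Lambda> X)"
proof -
  have Xc: "X \<in> carrier_mat n n" using X by (rule psd_carrier)
  have "\<Lambda> X \<in> carrier_mat n n" using ch Xc unfolding quantum_channel_def by auto
  moreover have "blk n 1 X 0 0 = X" unfolding blk_def using Xc by (intro eq_matI) auto
  ultimately have "ampl n 1 \<Lambda> X = \<Lambda> X" unfolding ampl_def by (intro eq_matI) auto
  moreover have "\<forall>X. psd (n * 1) X \<longrightarrow> psd (n * 1) (ampl n 1 \<Lambda> X)"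
    using ch unfolding quantum_channel_def by (blast intro: order_refl)
  then have "psd n (ampl n 1 \<Lambda> X)" using X by simp
  ultimately show ?thesis by simp
qed

lemma effect_convex_comb:
  fixes E :: "'l \<Rightarrow> complex mat"
  assumes S: "finite S" and q: "\<And>l. l \<in> S \<Longrightarrow> q l \<ge> 0" "(\<Sum>l\<in>S. q l) = 1"
    and E: "\<And>l. l \<in> S \<Longrightarrow> effect n (E l)"
  shows "effect n (mat n n (\<lambda>(a,b). \<Sum>l\<in>S. complex_of_real (q l) * E l $$ (a,b)))"
proof -
  have Ec: "E l \<in> carrier_mat n n" if "l \<in> S" for l
    using E[OF that] unfolding effect_def by (auto intro: psd_carrier)
  have "1\<^sub>m n - mat n n (\<lambda>(a,b). \<Sum>l\<in>S. complex_of_real (q l) * E l $$ (a,b)) =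
      mat n n (\<lambda>(a,b). \<Sum>l\<in>S. complex_of_real (q l) * (1\<^sub>m n - E l) $$ (a,b))"
  proof (rule eq_matI)
    fix a b assume "a < dim_row (mat n n (\<lambda>(a,b). \<Sum>l\<in>S. complex_of_real (q l) * (1\<^sub>m n - E l) $$ (a,b)))"
      "b < dim_col (mat n n (\<lambda>(a,b). \<Sum>l\<in>S. complex_of_real (q l) * (1\<^sub>m n - E l) $$ (a,b)))"
    then have ab: "a < n" "b < n" by auto
    have "(\<Sum>l\<in>S. complex_of_real (q l) * (1\<^sub>m n - E l) $$ (a,b)) =
        (\<Sum>l\<in>S. complex_of_real (q l) * ((if a = b then 1 else 0) - E l $$ (a,b)))"
    proof (rule sum.cong)
      fix l assume "l \<in> S"
      with ab Ec[OF this] show "complex_of_real (q l) * (1\<^sub>m n - E l) $$ (a,b) =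
          complex_of_real (q l) * ((if a = b then 1 else 0) - E l $$ (a,b))" by simp
    qed simp
    also have "\<dots> = complex_of_real (\<Sum>l\<in>S. q l) * (if a = b then 1 else 0) -
        (\<Sum>l\<in>S. complex_of_real (q l) * E l $$ (a,b))"
      by (simp add: right_diff_distrib sum_subtractf sum_distrib_right)
    finally show "(1\<^sub>m n - mat n n (\<lambda>(a,b). \<Sum>l\<in>S. complex_of_real (q l) * E l $$ (a,b))) $$ (a,b) =
        mat n n (\<lambda>(a,b). \<Sum>l\<in>S. complex_of_real (q l) * (1\<^sub>m n - E l) $$ (a,b)) $$ (a,b)"
      using ab q(2) by simp
  qed auto
  then show ?thesis
    unfolding effect_def using S q E
    by (auto intro!: psd_nonneg_comb simp: effect_def)
qed

lemma convex_comb_mult_vec_fixed: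
  fixes E :: "'l \<Rightarrow> complex mat"
  assumes q: "(\<Sum>l\<in>S. q l) = 1" and \<phi>: "\<phi> \<in> carrier_vec n"
    and E: "\<And>l. l \<in> S \<Longrightarrow> E l \<in> carrier_mat n n" "\<And>l. l \<in> S \<Longrightarrow> E l *\<^sub>v \<phi> = \<phi>"
  shows "mat n n (\<lambda>(a,b). \<Sum>l\<in>S. complex_of_real (q l) * E l $$ (a,b)) *\<^sub>v \<phi> = \<phi>"
proof (rule eq_vecI)
  fix a assume "a < dim_vec \<phi>"
  then have a: "a < n" using \<phi> by simp
  have "(mat n n (\<lambda>(a,b). \<Sum>l\<in>S. complex_of_real (q l) * E l $$ (a,b)) *\<^sub>v \<phi>) $ a =
      (\<Sum>b<n. \<Sum>l\<in>S. complex_of_real (q l) * (E l $$ (a,b) * \<phi> $ b))"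
    using a \<phi> by (simp add: scalar_prod_def atLeast0LessThan sum_distrib_right mult.assoc)
  also have "\<dots> = (\<Sum>l\<in>S. complex_of_real (q l) * (\<Sum>b<n. E l $$ (a,b) * \<phi> $ b))"
    by (subst sum.swap) (simp add: sum_distrib_left)
  also have "\<dots> = (\<Sum>l\<in>S. complex_of_real (q l) * (E l *\<^sub>v \<phi>) $ a)"
  proof (rule sum.cong)
    fix l assume "l \<in> S"
    with E(1)[OF this] a \<phi> show "complex_of_real (q l) * (\<Sum>b<n. E l $$ (a,b) * \<phi> $ b) =
        complex_of_real (q l) * (E l *\<^sub>v \<phi>) $ a"
      by (simp add: scalar_prod_def atLeast0LessThan)
  qed simp
  also have "\<dots> = complex_of_real (\<Sum>l\<in>S. q l) * \<phi> $ a"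
    using E(2) by (simp add: sum_distrib_right)
  finally show "(mat n n (\<lambda>(a,b). \<Sum>l\<in>S. complex_of_real (q l) * E l $$ (a,b)) *\<^sub>v \<phi>) $ a = \<phi> $ a"
    using q by simp
qed (use \<phi> in simp)

lemma Omega_carrier: "Omega n L q E j \<in> carrier_mat n n"
  by (simp add: Omega_def)

lemma unitary_channel_proj:
  assumes "U \<in> carrier_mat n n" "\<psi> \<in> carrier_vec n"
  shows "unitary_channel U (proj n \<psi>) = proj n (U *\<^sub>v \<psi>)"
  unfolding unitary_channel_def using proj_mult_vec[OF assms] by simp

context
  fixes n :: nat and U :: "complex mat" and J :: "'j set" and \<psi> :: "'j \<Rightarrow> complex vec"
    and p :: "'j \<Rightarrow> real" and L :: "'j \<Rightarrow> 'l set" and q :: "'j \<Rightarrow> 'l \<Rightarrow> real"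
    and E :: "'j \<Rightarrow> 'l \<Rightarrow> complex mat"
  assumes U: "unitary_mat n U" and protocol: "verification_protocol n U J \<psi> p L q E"
begin

lemma test_state:
  assumes "j \<in> J"
  shows "\<psi> j \<in> carrier_vec n" "conjugate (\<psi> j) \<bullet> \<psi> j = 1"
  using protocol assms unfolding verification_protocol_def pure_state_def by auto

lemma output_state:
  assumes j: "j \<in> J"
  shows "U *\<^sub>v \<psi> j \<in> carrier_vec n" "conjugate (U *\<^sub>v \<psi> j) \<bullet> (U *\<^sub>v \<psi> j) = 1"
proof -
  have "U \<in> carrier_mat n n" using U unfolding unitary_mat_def by auto
  then show "U *\<^sub>v \<psi> j \<in> carrier_vec n" using test_state[OF j] by simp
  show "conjugate (U *\<^sub>v \<psi> j) \<bullet> (U *\<^sub>v \<psi> j) = 1"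
    using unitary_mat_norm[OF U test_state(1)[OF j]] test_state(2)[OF j] by simp
qed

lemma test_weights:
  assumes "j \<in> J"
  shows "finite (L j)" "\<And>l. l \<in> L j \<Longrightarrow> q j l \<ge> 0" "(\<Sum>l\<in>L j. q j l) = 1"
  using protocol assms unfolding verification_protocol_def by (auto simp: less_imp_le)

lemma test_effect:
  assumes "j \<in> J" "l \<in> L j"
  shows "effect n (E j l)" "E j l \<in> carrier_mat n n" "E j l *\<^sub>v (U *\<^sub>v \<psi> j) = U *\<^sub>v \<psi> j"
proof -
  show "effect n (E j l)" "E j l *\<^sub>v (U *\<^sub>v \<psi> j) = U *\<^sub>v \<psi> j"
    using protocol assms unfolding verification_protocol_def by auto
  then show "E j l \<in> carrier_mat n n" unfolding effect_def by (simp add: psd_carrier)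
qed

lemma Omega_effect:
  assumes j: "j \<in> J"
  shows "effect n (Omega n L q E j)"
  unfolding Omega_def using test_weights[OF j] test_effect(1)[OF j] by (rule effect_convex_comb)

lemma Omega_fixes_output:
  assumes j: "j \<in> J"
  shows "Omega n L q E j *\<^sub>v (U *\<^sub>v \<psi> j) = U *\<^sub>v \<psi> j"
  unfolding Omega_def
  using test_weights(3)[OF j] output_state(1)[OF j] test_effect(2,3)[OF j]
  by (rule convex_comb_mult_vec_fixed)

lemma pass_prob_unitary_channel:
  assumes j: "j \<in> J"
  shows "pass_prob n L q E \<psi> (unitary_channel U) j = 1"
proof -
  have "pass_prob n L q E \<psi> (unitary_channel U) j = mtrace (Omega n L q E j * proj n (U *\<^sub>v \<psi> j))"
    unfolding pass_prob_def using U test_state[OF j] by (simp add: unitary_channel_proj unitary_mat_def)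
  also have "\<dots> = 1"
    using output_state[OF j] Omega_fixes_output[OF j]
    by (simp add: mtrace_mult_proj[OF Omega_carrier])
  finally show ?thesis .
qed

lemma passed_effective_test_imp_output:
  assumes j: "j \<in> J" and effective: "nu n L q E j > 0"
    and ch: "quantum_channel n \<Lambda>" and pass: "pass_prob n L q E \<psi> \<Lambda> j = 1"
  shows "\<Lambda> (proj n (\<psi> j)) = unitary_channel U (proj n (\<psi> j))"
proof -
  have "mtrace (\<Lambda> (proj n (\<psi> j))) = mtrace (proj n (\<psi> j))"
    using ch unfolding quantum_channel_def by simp
  then have "mtrace (\<Lambda> (proj n (\<psi> j))) = 1" using test_state[OF j] by (simp add: mtrace_proj)
  moreover have "second_eig (Omega n L q E j) < 1" using effective unfolding nu_def by simp
  ultimately have "\<Lambda> (proj n (\<psi> j)) = proj n (U *\<^sub>v \<psi> j)"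
    using Omega_effect[OF j] output_state[OF j] Omega_fixes_output[OF j]
      quantum_channel_psd[OF ch psd_proj[OF test_state(1)[OF j]]] pass
    unfolding effect_def pass_prob_def by (intro accepted_state_eq_proj) auto
  then show ?thesis using U test_state[OF j] by (simp add: unitary_channel_proj unitary_mat_def)
qed

lemma verified_reliably_imp_identification_set:
  assumes "verified_reliably n U J \<psi> L q E"
  shows "identification_set n U (\<psi> ` J)"
  unfolding identification_set_def
proof (intro conjI allI impI ballI)
  show "pure_state n \<phi>" if "\<phi> \<in> \<psi> ` J" for \<phi>
    using protocol that unfolding verification_protocol_def by auto
  fix \<Lambda> \<rho>
  assume \<Lambda>: "quantum_channel n \<Lambda> \<and> (\<forall>\<phi>\<in>\<psi> ` J. \<Lambda> (proj n \<phi>) = unitary_channel U (proj n \<phi>))"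
    and \<rho>: "density_op n \<rho>"
  have "pass_prob n L q E \<psi> \<Lambda> j = 1" if "j \<in> J" for j
    using \<Lambda> that pass_prob_unitary_channel[OF that] unfolding pass_prob_def by simp
  then show "\<Lambda> \<rho> = unitary_channel U \<rho>"
    using assms \<Lambda> \<rho> unfolding verified_reliably_def by blast
qed

lemma identification_set_effective_imp_verified_reliably:
  assumes "identification_set n U (effective_set n J \<psi> L q E)"
  shows "verified_reliably n U J \<psi> L q E"
  unfolding verified_reliably_def
proof (intro conjI allI impI ballI)
  show "pass_prob n L q E \<psi> (unitary_channel U) j = 1" if "j \<in> J" for j
    using pass_prob_unitary_channel[OF that] .
  fix \<Lambda> \<rho>
  assume \<Lambda>: "quantum_channel n \<Lambda> \<and> (\<forall>j\<in>J. pass_prob n L q E \<psi> \<Lambda> j = 1)"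
    and \<rho>: "density_op n \<rho>"
  have "\<forall>\<phi>\<in>effective_set n J \<psi> L q E. \<Lambda> (proj n \<phi>) = unitary_channel U (proj n \<phi>)"
    using \<Lambda> passed_effective_test_imp_output unfolding effective_set_def by auto
  then show "\<Lambda> \<rho> = unitary_channel U \<rho>"
    using assms \<Lambda> \<rho> unfolding identification_set_def by blast
qed

end

theorem lemma1:
  fixes n :: nat and U :: "complex mat" and J :: "'j set" and \<psi> :: "'j \<Rightarrow> complex vec"
    and p :: "'j \<Rightarrow> real" and L :: "'j \<Rightarrow> 'l set" and q :: "'j \<Rightarrow> 'l \<Rightarrow> real"
    and E :: "'j \<Rightarrow> 'l \<Rightarrow> complex mat"
  assumes "n \<ge> 1"
    and "unitary_mat n U"
    and "verification_protocol n U J \<psi> p L q E"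
  shows "(verified_reliably n U J \<psi> L q E \<longrightarrow> identification_set n U (\<psi> ` J))
    \<and> (identification_set n U (effective_set n J \<psi> L q E) \<longrightarrow> verified_reliably n U J \<psi> L q E)
    \<and> (ordinary n J L q E \<longrightarrow> (verified_reliably n U J \<psi> L q E \<longleftrightarrow> identification_set n U (\<psi> ` J)))"
proof (intro conjI impI)
  note part1 = verified_reliably_imp_identification_set[OF assms(2,3)]
  note part2 = identification_set_effective_imp_verified_reliably[OF assms(2,3)]
  show "identification_set n U (\<psi> ` J)" if "verified_reliably n U J \<psi> L q E"
    using part1 that .
  show "verified_reliably n U J \<psi> L q E" if "identification_set n U (effective_set n J \<psi> L q E)"
    using part2 that .
  assume "ordinary n J L q E"
  then have "effective_set n J \<psi> L q E = \<psi> ` J"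
    unfolding ordinary_def effective_set_def by auto
  then show "verified_reliably n U J \<psi> L q E \<longleftrightarrow> identification_set n U (\<psi> ` J)"
    using part1 part2 by auto
qed

end
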